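(* Let $(M,d)$ be a complete pointed metric space. Each of the sets $\mathcal{R}\setminus d^{-1}(0)$, $p^{-1}(M\times M)$ and $\widetilde{M}$ belongs to $\mathfrak{C}$; that is, for each such set $C$, whenever $\mu,\nu$ are positive Radon measures on $\beta\widetilde{M}$ with $\mu\preccurlyeq\nu$ and $\nu$ concentrated on $C$, $\mu$ is also concentrated on $C$.
   Context: $\widetilde{M}=\{(x,y)\in M\times M:x\ne y\}$, viewed inside its Stone–Čech compactification $\beta\widetilde{M}$; Radon measures identified with $C(\beta\widetilde{M})^*$. $d:\beta\widetilde{M}\to[0,\infty]$ continuously extends the metric on $\widetilde{M}$. $M^u$ is the uniform (Samuel) compactification of $M$; $p_1,p_2:\beta\widetilde{M}\to M^u$ continuously extend the coordinate projections, $p=(p_1,p_2)$. $\mathcal{R}(M)=\{\xi\in M^u:\overline{d_0}(\xi)<\infty\}$, where $\overline{d_0}:M^u\to[0,\infty]$ continuously extends $x\mapsto d(x,0)$ ($0$ the base point), and $\mathcal{R}=p^{-1}(\mathcal{R}(M)\times\mathcal{R}(M))$. $G$ is the set of $g\in C(\beta\widetilde{M})$ with $d(x,y)g(x,y)\le d(x,u)g(x,u)+d(u,y)g(u,y)$ for all distinct $x,u,y\in M$; $\mu\preccurlyeq\nu$ iff $\int g\,d\mu\le\int g\,d\nu$ for all $g\in G$. $\mathfrak{C}$ is the family of Borel sets with the stated preservation property. Throughout, $M$ has at least three distinct points. *)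

theory Defs
  imports "HOL-Analysis.Analysis"
begin

definition Mtilde :: "('a \<times> 'a) set" where
  "Mtilde = {(x, y). x \<noteq> y}"

definition is_stone_cech_compactification ::
    "'a::topological_space set \<Rightarrow> ('a \<Rightarrow> 'b::t2_space) \<Rightarrow> bool" where
  "is_stone_cech_compactification X e \<longleftrightarrow>
     compact (UNIV :: 'b set) \<and>
     (\<exists>e'. homeomorphism X (e ` X) e e') \<and>
     closure (e ` X) = UNIV \<and>
     (\<forall>f :: 'a \<Rightarrow> real. continuous_on X f \<and> bounded (f ` X) \<longrightarrow>
        (\<exists>g :: 'b \<Rightarrow> real. continuous_on UNIV g \<and> (\<forall>x\<in>X. g (e x) = f x)))"

definition is_samuel_compactification :: "('a::metric_space \<Rightarrow> 'c::t2_space) \<Rightarrow> bool" where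
  "is_samuel_compactification j \<longleftrightarrow>
     compact (UNIV :: 'c set) \<and>
     (\<exists>j'. homeomorphism UNIV (range j) j j') \<and>
     closure (range j) = UNIV \<and>
     (\<forall>f :: 'a \<Rightarrow> real. uniformly_continuous_on UNIV f \<and> bounded (range f) \<longrightarrow>
        (\<exists>g :: 'c \<Rightarrow> real. continuous_on UNIV g \<and> (\<forall>x. g (j x) = f x))) \<and>
     (\<forall>g :: 'c \<Rightarrow> real. continuous_on UNIV g \<longrightarrow> uniformly_continuous_on UNIV (g \<circ> j))"

definition radon_measure :: "'b::topological_space measure \<Rightarrow> bool" where
  "radon_measure \<mu> \<longleftrightarrow>
     sets \<mu> = sets borel \<and> emeasure \<mu> UNIV < \<infinity> \<and>
     (\<forall>A\<in>sets borel. emeasure \<mu> A = (INF U\<in>{U. open U \<and> A \<subseteq> U}. emeasure \<mu> U)) \<and>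
     (\<forall>U. open U \<longrightarrow> emeasure \<mu> U = (SUP K\<in>{K. compact K \<and> K \<subseteq> U}. emeasure \<mu> K))"

definition concentrated_on :: "'b measure \<Rightarrow> 'b set \<Rightarrow> bool" where
  "concentrated_on \<mu> C \<longleftrightarrow> emeasure \<mu> (space \<mu> - C) = 0"

definition G_set :: "('a::metric_space \<times> 'a \<Rightarrow> 'b::topological_space) \<Rightarrow> ('b \<Rightarrow> real) set" where
  "G_set \<iota> = {g. continuous_on UNIV g \<and>
     (\<forall>x u y. x \<noteq> u \<and> u \<noteq> y \<and> x \<noteq> y \<longrightarrow>
        dist x y * g (\<iota> (x, y)) \<le> dist x u * g (\<iota> (x, u)) + dist u y * g (\<iota> (u, y)))}"

definition preceq :: "('a::metric_space \<times> 'a \<Rightarrow> 'b::topological_space) \<Rightarrow> 'b measure \<Rightarrow> 'b measure \<Rightarrow> bool" where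
  "preceq \<iota> \<mu> \<nu> \<longleftrightarrow> (\<forall>g\<in>G_set \<iota>. integral\<^sup>L \<mu> g \<le> integral\<^sup>L \<nu> g)"

definition frakC :: "('a::metric_space \<times> 'a \<Rightarrow> 'b::topological_space) \<Rightarrow> 'b set set" where
  "frakC \<iota> = {C. C \<in> sets borel \<and>
     (\<forall>\<mu> \<nu>. radon_measure \<mu> \<and> radon_measure \<nu> \<and> preceq \<iota> \<mu> \<nu> \<and> concentrated_on \<nu> C
        \<longrightarrow> concentrated_on \<mu> C)}"

end

theory Submission
  imports Defs
begin

(* A Borel set C belongs to frakC as soon as the part of its complement not already excluded by a
   larger member of frakC is covered by countably many Borel sets A_k, each of which is separated
   from every compact subset of C by functions of G.  Indeed, if g in G is at least c > 0 on A_k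
   and at most tau on the compact complement of an open U containing -C with nu(U) < tau (outer
   regularity of nu), then c mu(A_k) <= int g dmu <= int g dnu <= nu(U) + tau nu(UNIV), whence
   mu(A_k) = 0.

   The separating functions are the continuous extensions of
   (x, y) |-> min 1 ((phi x + phi y) / d(x, y)) with phi nonnegative and 1-Lipschitz; they lie
   in G by the triangle inequality.  A constant phi separates {d = 0} from compact subsets of
   {d > 0}; phi = (d(., 0) - n)^+ separates the complement of R; and phi = (dist(., F) - delta)^+
   for a finite net F of a compact subset of p^-1(M x M) separates the sets on which d is bounded
   and one coordinate stays away from the image of M.  These sets cover R - p^-1(M x M) because,
   M being complete, the image of M is a G_delta in its Samuel compactification.  Finally, the
   image of Mtilde is the intersection of the three sets, and frakC is closed under finite
   intersections. *)

section \<open>The family frakC and a separation criterion\<close>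

lemma radon_measure_sets: "radon_measure \<mu> \<Longrightarrow> sets \<mu> = sets borel"
  unfolding radon_measure_def by (elim conjE)

lemma radon_measure_space: "radon_measure \<mu> \<Longrightarrow> space \<mu> = UNIV"
  using sets_eq_imp_space_eq[OF radon_measure_sets] by simp

lemma radon_measure_finite: "radon_measure \<mu> \<Longrightarrow> finite_measure \<mu>"
proof (rule finite_measureI)
  assume "radon_measure \<mu>"
  then have "emeasure \<mu> UNIV < \<infinity>" unfolding radon_measure_def by (elim conjE)
  then show "emeasure \<mu> (space \<mu>) \<noteq> \<infinity>"
    using \<open>radon_measure \<mu>\<close> by (simp add: radon_measure_space)
qed

lemma radon_measure_outer_regular:
  "radon_measure \<mu> \<Longrightarrow> A \<in> sets borel \<Longrightarrow>
     emeasure \<mu> A = (INF U\<in>{U. open U \<and> A \<subseteq> U}. emeasure \<mu> U)"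
  unfolding radon_measure_def by (elim conjE) (erule bspec)

lemma radon_measure_integrable:
  fixes g :: "'b::topological_space \<Rightarrow> real"
  assumes "radon_measure \<mu>" "continuous_on UNIV g" "\<And>w. \<bar>g w\<bar> \<le> B"
  shows "integrable \<mu> g"
proof -
  interpret finite_measure \<mu> using assms(1) by (rule radon_measure_finite)
  have "g \<in> borel_measurable \<mu>"
    using borel_measurable_continuous_onI[OF assms(2)]
    by (simp add: measurable_cong_sets[OF radon_measure_sets[OF assms(1)] refl])
  then show ?thesis
    using assms(3) by (intro integrable_const_bound[where B = B]) auto
qed

lemma concentrated_on_iff: "radon_measure \<mu> \<Longrightarrow> concentrated_on \<mu> C \<longleftrightarrow> emeasure \<mu> (- C) = 0"
  by (simp add: concentrated_on_def radon_measure_space Compl_eq_Diff_UNIV)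

lemma concentrated_on_mono:
  assumes "radon_measure \<mu>" "concentrated_on \<mu> C" "C \<subseteq> C'" "C \<in> sets borel"
  shows "concentrated_on \<mu> C'"
  using assms emeasure_eq_0[of "- C" \<mu> "- C'"]
  by (simp add: concentrated_on_iff radon_measure_sets)

lemma frakC_borel: "C \<in> frakC \<iota> \<Longrightarrow> C \<in> sets borel"
  unfolding frakC_def by blast

lemma frakC_D:
  "C \<in> frakC \<iota> \<Longrightarrow> radon_measure \<mu> \<Longrightarrow> radon_measure \<nu> \<Longrightarrow> preceq \<iota> \<mu> \<nu> \<Longrightarrow>
     concentrated_on \<nu> C \<Longrightarrow> concentrated_on \<mu> C"
  unfolding frakC_def by blast

lemma frakC_I:
  assumes "C \<in> sets borel"
    and "\<And>\<mu> \<nu>. radon_measure \<mu> \<Longrightarrow> radon_measure \<nu> \<Longrightarrow> preceq \<iota> \<mu> \<nu> \<Longrightarrow>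
           concentrated_on \<nu> C \<Longrightarrow> concentrated_on \<mu> C"
  shows "C \<in> frakC \<iota>"
  using assms unfolding frakC_def by blast

lemma frakC_UNIV: "UNIV \<in> frakC \<iota>"
  by (rule frakC_I) (auto simp: concentrated_on_def)

lemma frakC_Int:
  assumes "C1 \<in> frakC \<iota>" "C2 \<in> frakC \<iota>"
  shows "C1 \<inter> C2 \<in> frakC \<iota>"
proof (rule frakC_I)
  have borel: "C1 \<in> sets borel" "C2 \<in> sets borel"
    using assms by (auto intro: frakC_borel)
  then show "C1 \<inter> C2 \<in> sets borel" by simp
  fix \<mu> \<nu> assume \<mu>: "radon_measure \<mu>" and \<nu>: "radon_measure \<nu>"
    and \<mu>\<nu>: "preceq \<iota> \<mu> \<nu>" and "concentrated_on \<nu> (C1 \<inter> C2)"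
  then have "concentrated_on \<nu> C1" "concentrated_on \<nu> C2"
    using borel by (auto elim: concentrated_on_mono)
  then have "concentrated_on \<mu> C1" "concentrated_on \<mu> C2"
    using frakC_D[OF assms(1) \<mu> \<nu> \<mu>\<nu>] frakC_D[OF assms(2) \<mu> \<nu> \<mu>\<nu>] by blast+
  then have "- C1 \<in> null_sets \<mu>" "- C2 \<in> null_sets \<mu>"
    using \<mu> borel by (auto simp: concentrated_on_iff null_sets_def radon_measure_sets)
  then have "- C1 \<union> - C2 \<in> null_sets \<mu>" by blast
  then show "concentrated_on \<mu> (C1 \<inter> C2)"
    using \<mu> by (simp add: concentrated_on_iff null_setsD1)
qed

lemma (in finite_measure) measure_le_integral:
  assumes "A \<in> sets M" "integrable M g" "\<And>w. 0 \<le> g w" "\<And>w. w \<in> A \<Longrightarrow> c \<le> g w" "0 \<le> c"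
  shows "c * measure M A \<le> integral\<^sup>L M g"
proof -
  have "integrable M (indicator A :: 'a \<Rightarrow> real)"
    using assms(1) by (simp add: less_top[symmetric])
  have "c * measure M A = integral\<^sup>L M (\<lambda>w. c * indicator A w)"
    using assms(1) by simp
  also have "\<dots> \<le> integral\<^sup>L M g"
    using assms integrable_mult_right[OF \<open>integrable M (indicator A)\<close>]
    by (intro integral_mono) (auto simp: indicator_def)
  finally show ?thesis .
qed

lemma (in finite_measure) integral_le_measure_add:
  assumes "U \<in> sets M" "integrable M g" "\<And>w. g w \<le> 1" "\<And>w. w \<notin> U \<Longrightarrow> g w \<le> \<tau>" "0 \<le> \<tau>"
  shows "integral\<^sup>L M g \<le> measure M U + \<tau> * measure M (space M)"
proof -
  have "integrable M (indicator U :: 'a \<Rightarrow> real)"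
    using assms(1) by (simp add: less_top[symmetric])
  have "integral\<^sup>L M g \<le> integral\<^sup>L M (\<lambda>w. indicator U w + \<tau>)"
    using assms Bochner_Integration.integrable_add[OF \<open>integrable M (indicator U)\<close> integrable_const]
    by (intro integral_mono) (auto simp: indicator_def intro: add_increasing2)
  also have "\<dots> = measure M U + \<tau> * measure M (space M)"
    using assms(1)
    by (subst Bochner_Integration.integral_add[OF \<open>integrable M (indicator U)\<close> integrable_const])
      (simp_all add: Int_absorb2)
  finally show ?thesis .
qed

lemma G_set_continuous: "g \<in> G_set \<iota> \<Longrightarrow> continuous_on UNIV g"
  unfolding G_set_def by blast

lemma preceq_integral_le: "preceq \<iota> \<mu> \<nu> \<Longrightarrow> g \<in> G_set \<iota> \<Longrightarrow> integral\<^sup>L \<mu> g \<le> integral\<^sup>L \<nu> g"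
  unfolding preceq_def by blast

lemma preceq_measure_less:
  fixes \<iota> :: "'a::metric_space \<times> 'a \<Rightarrow> 'b::topological_space"
  assumes "compact (UNIV :: 'b set)"
    and \<mu>: "radon_measure \<mu>" and \<nu>: "radon_measure \<nu>" and \<mu>\<nu>: "preceq \<iota> \<mu> \<nu>"
    and C: "C \<in> sets borel" "concentrated_on \<nu> C" and A: "A \<in> sets borel" and "0 < c" "0 < \<tau>"
    and separating: "\<And>K. compact K \<Longrightarrow> K \<subseteq> C \<Longrightarrow>
      \<exists>g\<in>G_set \<iota>. (\<forall>w. 0 \<le> g w \<and> g w \<le> 1) \<and> (\<forall>w\<in>K. g w \<le> \<tau>) \<and> (\<forall>w\<in>A. c \<le> g w)"
  shows "c * measure \<mu> A < \<tau> * (1 + measure \<nu> (space \<nu>))"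
proof -
  interpret \<mu>: finite_measure \<mu> using \<mu> by (rule radon_measure_finite)
  interpret \<nu>: finite_measure \<nu> using \<nu> by (rule radon_measure_finite)
  have "(INF U\<in>{U. open U \<and> - C \<subseteq> U}. emeasure \<nu> U) < \<tau>"
    using C \<nu> \<open>0 < \<tau>\<close> radon_measure_outer_regular[OF \<nu>, of "- C"]
    by (simp add: concentrated_on_iff)
  then obtain U where U: "open U" "- C \<subseteq> U" "measure \<nu> U < \<tau>"
    using \<open>0 < \<tau>\<close> by (auto simp: INF_less_iff \<nu>.emeasure_eq_measure ennreal_less_iff)
  have "compact (- U)"
    using assms(1) U(1) by (simp add: Compl_eq_Diff_UNIV compact_diff)
  moreover have "- U \<subseteq> C"
    using U(2) by blast
  ultimately obtain g where g: "g \<in> G_set \<iota>" "\<And>w. 0 \<le> g w" "\<And>w. g w \<le> 1"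
    "\<And>w. w \<notin> U \<Longrightarrow> g w \<le> \<tau>" "\<And>w. w \<in> A \<Longrightarrow> c \<le> g w"
    using separating by (metis ComplI)
  have "\<bar>g w\<bar> \<le> 1" for w
    using g(2)[of w] g(3)[of w] by simp
  then have "integrable \<mu> g" "integrable \<nu> g"
    using radon_measure_integrable[OF _ G_set_continuous[OF g(1)]] \<mu> \<nu> by blast+
  then have "c * measure \<mu> A \<le> integral\<^sup>L \<mu> g"
    using A g \<open>0 < c\<close> \<mu> by (intro \<mu>.measure_le_integral) (auto simp: radon_measure_sets)
  also have "\<dots> \<le> integral\<^sup>L \<nu> g"
    using \<mu>\<nu> g(1) by (rule preceq_integral_le)
  also have "\<dots> \<le> measure \<nu> U + \<tau> * measure \<nu> (space \<nu>)"
    using \<open>integrable \<nu> g\<close> g U(1) \<open>0 < \<tau>\<close> \<nu>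
    by (intro \<nu>.integral_le_measure_add) (auto simp: radon_measure_sets)
  also have "\<dots> < \<tau> * (1 + measure \<nu> (space \<nu>))"
    using U(3) by (simp add: algebra_simps)
  finally show ?thesis .
qed

lemma preceq_emeasure_eq_0:
  fixes \<iota> :: "'a::metric_space \<times> 'a \<Rightarrow> 'b::topological_space"
  assumes "compact (UNIV :: 'b set)"
    and \<mu>: "radon_measure \<mu>" and \<nu>: "radon_measure \<nu>" and \<mu>\<nu>: "preceq \<iota> \<mu> \<nu>"
    and C: "C \<in> sets borel" "concentrated_on \<nu> C" and A: "A \<in> sets borel" and "0 < c"
    and separating: "\<And>K \<tau>. compact K \<Longrightarrow> K \<subseteq> C \<Longrightarrow> 0 < \<tau> \<Longrightarrow>
      \<exists>g\<in>G_set \<iota>. (\<forall>w. 0 \<le> g w \<and> g w \<le> 1) \<and> (\<forall>w\<in>K. g w \<le> \<tau>) \<and> (\<forall>w\<in>A. c \<le> g w)"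
  shows "emeasure \<mu> A = 0"
proof -
  define T where "T = measure \<nu> (space \<nu>)"
  have "c * measure \<mu> A \<le> 0"
  proof (rule ccontr)
    assume "\<not> c * measure \<mu> A \<le> 0"
    moreover have "0 \<le> T" by (simp add: T_def)
    ultimately have \<tau>: "0 < c * measure \<mu> A / (1 + T)" by simp
    have "c * measure \<mu> A < c * measure \<mu> A / (1 + T) * (1 + T)"
      using preceq_measure_less[OF assms(1-8) \<tau> separating[OF _ _ \<tau>]] by (simp only: T_def)
    then show False
      using \<open>0 \<le> T\<close> by simp
  qed
  then have "measure \<mu> A = 0"
    using \<open>0 < c\<close> by (simp add: mult_le_0_iff measure_le_0_iff)
  then show ?thesis
    using finite_measure.emeasure_eq_measure[OF radon_measure_finite[OF \<mu>]] by simp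
qed

lemma frakC_criterion:
  fixes \<iota> :: "'a::metric_space \<times> 'a \<Rightarrow> 'b::topological_space"
    and A :: "nat \<Rightarrow> 'b set" and c :: "nat \<Rightarrow> real"
  assumes "compact (UNIV :: 'b set)"
    and C: "C \<in> sets borel" "C' \<in> frakC \<iota>" "C \<subseteq> C'"
    and A: "\<And>k. A k \<in> sets borel" "C' - C \<subseteq> (\<Union>k. A k)"
    and c: "\<And>k. 0 < c k"
    and separating: "\<And>k K \<tau>. compact K \<Longrightarrow> K \<subseteq> C \<Longrightarrow> 0 < \<tau> \<Longrightarrow>
      \<exists>g\<in>G_set \<iota>. (\<forall>w. 0 \<le> g w \<and> g w \<le> 1) \<and> (\<forall>w\<in>K. g w \<le> \<tau>) \<and> (\<forall>w\<in>A k. c k \<le> g w)"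
  shows "C \<in> frakC \<iota>"
proof (rule frakC_I[OF C(1)])
  fix \<mu> \<nu> assume \<mu>: "radon_measure \<mu>" and \<nu>: "radon_measure \<nu>"
    and \<mu>\<nu>: "preceq \<iota> \<mu> \<nu>" and \<nu>C: "concentrated_on \<nu> C"
  have "concentrated_on \<mu> C'"
    using frakC_D[OF C(2) \<mu> \<nu> \<mu>\<nu>] concentrated_on_mono[OF \<nu> \<nu>C C(3,1)] by blast
  then have "- C' \<in> null_sets \<mu>"
    using \<mu> frakC_borel[OF C(2)] by (simp add: concentrated_on_iff null_sets_def radon_measure_sets borel_comp)
  moreover have "A k \<in> null_sets \<mu>" for k
    using preceq_emeasure_eq_0[OF assms(1) \<mu> \<nu> \<mu>\<nu> C(1) \<nu>C A(1) c separating] A(1) \<mu>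
    by (simp add: null_sets_def radon_measure_sets)
  ultimately have "- C' \<union> (\<Union>k. A k) \<in> null_sets \<mu>"
    by blast
  moreover have "- C \<in> sets \<mu>" and "- C \<subseteq> - C' \<union> (\<Union>k. A k)"
    using A(2) C(1) \<mu> by (auto simp: radon_measure_sets)
  ultimately have "- C \<in> null_sets \<mu>"
    by (rule null_sets_subset)
  then show "concentrated_on \<mu> C"
    using \<mu> by (simp add: concentrated_on_iff null_setsD1)
qed

lemma image_subset_closed_by_density:
  fixes f :: "'b::topological_space \<Rightarrow> 'x::topological_space"
  assumes "continuous_on UNIV f" "closed S" "open V" "closure D = UNIV" "f ` (V \<inter> D) \<subseteq> S"
  shows "f ` V \<subseteq> S"
proof -
  have "V \<subseteq> closure (V \<inter> D)"
    using open_Int_closure_subset[OF assms(3), of D] assms(4) by simp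
  moreover have "f ` closure (V \<inter> D) \<subseteq> S"
    using assms(1,2,5) by (intro image_closure_subset) (auto intro: continuous_on_subset)
  ultimately show ?thesis by blast
qed

lemma open_prod_contains_balls:
  fixes a :: "'a::metric_space" and b :: "'b::metric_space"
  assumes "open S" "(a, b) \<in> S"
  obtains r where "0 < r" "ball a r \<times> ball b r \<subseteq> S"
proof -
  obtain A B where AB: "open A" "open B" "(a, b) \<in> A \<times> B" "A \<times> B \<subseteq> S"
    using assms by (rule open_prod_elim)
  obtain ra where ra: "0 < ra" "ball a ra \<subseteq> A"
    using AB(1,3) by (auto elim: openE)
  obtain rb where rb: "0 < rb" "ball b rb \<subseteq> B"
    using AB(2,3) by (auto elim: openE)
  have "ball a (min ra rb) \<times> ball b (min ra rb) \<subseteq> A \<times> B"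
    using ra(2) rb(2) by auto
  then show ?thesis
    using ra(1) rb(1) AB(4) by (intro that[of "min ra rb"]) auto
qed

lemma open_Mtilde: "open (Mtilde :: ('a::t2_space \<times> 'a) set)"
proof -
  have "{(x, y). x \<noteq> y} = {(x, y) |x y. x \<noteq> (y::'a)}"
    by auto
  then show ?thesis
    unfolding Mtilde_def by (simp only: open_diagonal_complement)
qed

lemma compact_ennreal_lower_bound:
  fixes f :: "'b::topological_space \<Rightarrow> ennreal"
  assumes "compact K" "continuous_on K f" "\<And>w. w \<in> K \<Longrightarrow> 0 < f w"
  obtains r where "0 < r" "\<And>w. w \<in> K \<Longrightarrow> ennreal r < f w"
proof (cases "K = {}")
  case True
  then show ?thesis using that[of 1] by simp
next
  case False
  then obtain s where s: "s \<in> K" "\<And>w. w \<in> K \<Longrightarrow> f s \<le> f w"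
    using continuous_attains_inf[OF assms(1) _ assms(2)] by blast
  obtain r where "0 < r" "ennreal r < f s"
  proof (cases "f s")
    case (real q)
    then show ?thesis
      using assms(3)[OF s(1)] by (intro that[of "q / 2"]) (auto simp: ennreal_less_iff)
  next
    case top
    then show ?thesis using that[of 1] by simp
  qed
  then show ?thesis
    using s(2) by (intro that[of r]) (auto intro: order_less_le_trans)
qed

lemma compact_ennreal_upper_bound:
  fixes f :: "'b::topological_space \<Rightarrow> ennreal"
  assumes "compact K" "continuous_on K f" "\<And>w. w \<in> K \<Longrightarrow> f w < \<infinity>"
  obtains n where "0 < n" "\<And>w. w \<in> K \<Longrightarrow> f w < ennreal n"
proof (cases "K = {}")
  case True
  then show ?thesis using that[of 1] by simp
next
  case False
  then obtain s where s: "s \<in> K" "\<And>w. w \<in> K \<Longrightarrow> f w \<le> f s"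
    using continuous_attains_sup[OF assms(1) _ assms(2)] by blast
  then obtain q where q: "0 \<le> q" "f s = ennreal q"
    using assms(3)[OF s(1)] by (cases "f s") auto
  have "f w < ennreal (q + 1)" if "w \<in> K" for w
    using s(2)[OF that] q by (simp add: order_le_less_trans ennreal_less_iff)
  then show ?thesis
    using q(1) by (intro that[of "q + 1"]) auto
qed

definition infdist_excess :: "'a::metric_space set \<Rightarrow> real \<Rightarrow> 'a \<Rightarrow> real" where
  "infdist_excess F r x = max 0 (infdist x F - r)"

lemma infdist_excess_nonneg: "0 \<le> infdist_excess F r x"
  by (simp add: infdist_excess_def)

lemma infdist_excess_le_add_dist: "infdist_excess F r x \<le> infdist_excess F r y + dist x y"
  using infdist_triangle[of x F y] by (auto simp: infdist_excess_def)

lemma min_1_dist_lipschitz: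
  fixes x y y' :: "'a::metric_space"
  shows "\<bar>min 1 (dist y x) - min 1 (dist y' x)\<bar> \<le> dist y y'"
  using dist_triangle[of y x y'] dist_triangle[of y' x y] dist_commute[of y' y]
  by (auto simp: min_def abs_if)

lemma min_dist_triangle:
  fixes dxy dxu duy a b c :: real
  assumes "dxy \<le> dxu + duy" "a \<le> c + dxu" "b \<le> c + duy" "0 \<le> c"
  shows "min dxy (a + b) \<le> min dxu (a + c) + min duy (c + b)"
  using assms unfolding min_def by auto

lemma div_le_min_1_div:
  fixes d D s S :: real
  assumes "0 < d" "d < D" "0 < s" "s \<le> S" "s \<le> D"
  shows "s / D \<le> min 1 (S / d)"
proof -
  have "s / D \<le> s / d" using assms by (intro divide_left_mono) auto
  also have "\<dots> \<le> S / d" using assms by (intro divide_right_mono) auto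
  finally show ?thesis using assms by simp
qed

section \<open>The Samuel compactification\<close>

locale samuel_compactification =
  fixes j :: "'a::metric_space \<Rightarrow> 'c::t2_space"
  assumes samuel: "is_samuel_compactification j"
begin

lemma continuous_on_j: "continuous_on UNIV j"
proof -
  obtain j' where "homeomorphism UNIV (range j) j j'"
    using samuel unfolding is_samuel_compactification_def by (elim conjE exE)
  then show ?thesis unfolding homeomorphism_def by (elim conjE)
qed

lemma closure_range_j: "closure (range j) = UNIV"
  using samuel unfolding is_samuel_compactification_def by (elim conjE)

lemma samuel_extension_exists:
  fixes f :: "'a \<Rightarrow> real"
  assumes "uniformly_continuous_on UNIV f" "bounded (range f)"
  shows "\<exists>g. continuous_on UNIV g \<and> (\<forall>x. g (j x) = f x)"
  using samuel assms unfolding is_samuel_compactification_def by (elim conjE) blast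

lemma mem_closed_by_range_density:
  assumes "continuous_on UNIV f" "closed S" "open V" "\<And>x. j x \<in> V \<Longrightarrow> f (j x) \<in> S" "\<xi> \<in> V"
  shows "f \<xi> \<in> S"
  using image_subset_closed_by_density[OF assms(1-3) closure_range_j] assms(4,5) by blast

definition trunc_dist :: "'a \<Rightarrow> 'c \<Rightarrow> real" where
  "trunc_dist x = (SOME g. continuous_on UNIV g \<and> (\<forall>y. g (j y) = min 1 (dist y x)))"

lemma trunc_dist_exists: "\<exists>g. continuous_on UNIV g \<and> (\<forall>y. g (j y) = min 1 (dist y x))"
proof (rule samuel_extension_exists)
  have "1-lipschitz_on UNIV (\<lambda>y. min 1 (dist y x))"
    using min_1_dist_lipschitz by (intro lipschitz_onI) (auto simp: dist_real_def)
  then show "uniformly_continuous_on UNIV (\<lambda>y. min 1 (dist y x))"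
    by (rule lipschitz_on_uniformly_continuous)
  show "bounded (range (\<lambda>y. min 1 (dist y x)))"
    unfolding bounded_real by (rule exI[of _ 1]) auto
qed

lemma continuous_on_trunc_dist: "continuous_on UNIV (trunc_dist x)"
  and trunc_dist_j: "trunc_dist x (j y) = min 1 (dist y x)"
  using someI_ex[OF trunc_dist_exists[of x]] unfolding trunc_dist_def[symmetric] by blast+

lemma trunc_dist_bounds: "0 \<le> trunc_dist x \<xi>" "trunc_dist x \<xi> \<le> 1"
  using mem_closed_by_range_density[OF continuous_on_trunc_dist closed_atLeastAtMost open_UNIV, of x 0 1 \<xi>]
  by (auto simp: trunc_dist_j)

lemma trunc_dist_triangle: "min 1 (dist x y) \<le> trunc_dist x \<xi> + trunc_dist y \<xi>"
proof -
  have "min 1 (dist x y) \<le> min 1 (dist u x) + min 1 (dist u y)" for u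
    using dist_triangle3[of x y u] zero_le_dist[of u x] zero_le_dist[of u y] by linarith
  then show ?thesis
    using mem_closed_by_range_density[OF continuous_on_add[OF continuous_on_trunc_dist continuous_on_trunc_dist]
        closed_atLeast open_UNIV, of x y "min 1 (dist x y)" \<xi>]
    by (simp add: trunc_dist_j)
qed

lemma trunc_dist_le_add_dist: "trunc_dist x \<xi> \<le> trunc_dist y \<xi> + dist x y"
proof -
  have "min 1 (dist u x) - min 1 (dist u y) \<le> dist x y" for u
    using min_1_dist_lipschitz[of x u y] by (simp add: dist_commute abs_le_iff)
  then show ?thesis
    using mem_closed_by_range_density[OF continuous_on_diff[OF continuous_on_trunc_dist continuous_on_trunc_dist]
        closed_atMost open_UNIV, of x y "dist x y" \<xi>]
    by (simp add: trunc_dist_j)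
qed

lemma dist_less_if_trunc_dist_less: "trunc_dist x (j y) < r \<Longrightarrow> r \<le> 1 \<Longrightarrow> dist y x < r"
  by (simp add: trunc_dist_j min_def split: if_splits)

lemma open_trunc_dist_less: "open {\<xi>. trunc_dist x \<xi> < r}"
  by (intro open_Collect_less continuous_on_trunc_dist continuous_on_const)

lemma trunc_dist_eq_0D:
  assumes "trunc_dist x \<xi> = 0"
  shows "\<xi> = j x"
proof (rule ccontr)
  assume "\<xi> \<noteq> j x"
  then obtain U V where UV: "open U" "open V" "\<xi> \<in> U" "j x \<in> V" "U \<inter> V = {}"
    by (metis hausdorff)
  obtain r0 where "0 < r0" "ball x r0 \<subseteq> j -` V"
    using open_vimage[OF UV(2) continuous_on_j] UV(4) by (meson open_contains_ball vimageI2)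
  then obtain r where r: "0 < r" "r \<le> 1" "ball x r \<subseteq> j -` V"
    by (intro that[of "min 1 r0"]) auto
  have "\<xi> \<in> closure V"
  proof (rule mem_closed_by_range_density[of id, simplified])
    show "\<xi> \<in> {\<xi>. trunc_dist x \<xi> < r}"
      using assms r by simp
    fix y assume "j y \<in> {\<xi>. trunc_dist x \<xi> < r}"
    then have "y \<in> ball x r"
      using dist_less_if_trunc_dist_less r(2) by (simp add: dist_commute)
    then show "j y \<in> closure V"
      using r(3) closure_subset by blast
  qed (simp_all add: open_trunc_dist_less)
  then show False
    using UV(1,3,5) open_Int_closure_eq_empty by blast
qed

definition near_range :: "real \<Rightarrow> 'c set" where
  "near_range r = (\<Union>x. {\<xi>. trunc_dist x \<xi> < r})"

lemma open_near_range: "open (near_range r)"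
  unfolding near_range_def by (intro open_UN ballI open_trunc_dist_less)

lemma near_range_mono: "r \<le> s \<Longrightarrow> near_range r \<subseteq> near_range s"
  unfolding near_range_def by fastforce

lemma range_j_subset_near_range:
  assumes "0 < r"
  shows "range j \<subseteq> near_range r"
proof
  fix \<xi> assume "\<xi> \<in> range j"
  then obtain x where "\<xi> = j x" by blast
  then have "trunc_dist x \<xi> < r"
    using assms by (simp add: trunc_dist_j)
  then show "\<xi> \<in> near_range r"
    unfolding near_range_def by blast
qed

lemma Cauchy_if_trunc_dist_less:
  assumes s: "\<And>n. trunc_dist (s n) \<xi> < inverse (real (Suc n))"
  shows "Cauchy s"
proof (rule metric_CauchyI)
  fix e :: real assume "0 < e"
  then obtain N where N: "inverse (real (Suc N)) < min e 1 / 2"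
    using reals_Archimedean[of "min e 1 / 2"] by auto
  have "dist (s m) (s n) < e" if "N \<le> m" "N \<le> n" for m n
  proof -
    have "inverse (real (Suc m)) \<le> inverse (real (Suc N))" "inverse (real (Suc n)) \<le> inverse (real (Suc N))"
      using that by (simp_all add: le_imp_inverse_le)
    then have "min 1 (dist (s m) (s n)) < min e 1"
      using trunc_dist_triangle[of "s m" "s n" \<xi>] s[of m] s[of n] N by linarith
    then show ?thesis by (auto simp: min_def split: if_splits)
  qed
  then show "\<exists>N. \<forall>m\<ge>N. \<forall>n\<ge>N. dist (s m) (s n) < e" by blast
qed

lemma Inter_near_range_subset_range_j:
  assumes "complete (UNIV :: 'a set)" and \<xi>: "\<xi> \<in> (\<Inter>n. near_range (inverse (real (Suc n))))"
  shows "\<xi> \<in> range j"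
proof -
  have "\<forall>n. \<exists>x. trunc_dist x \<xi> < inverse (real (Suc n))"
    using \<xi> unfolding near_range_def by blast
  then obtain s where s: "\<And>n. trunc_dist (s n) \<xi> < inverse (real (Suc n))"
    by (metis choice)
  then obtain x where x: "s \<longlonglongrightarrow> x"
    using assms(1) Cauchy_if_trunc_dist_less unfolding complete_def by blast
  have "(\<lambda>n. inverse (real (Suc n)) + dist (s n) x) \<longlonglongrightarrow> 0 + dist x x"
    by (intro tendsto_add LIMSEQ_inverse_real_of_nat tendsto_dist x tendsto_const)
  moreover have "trunc_dist x \<xi> \<le> inverse (real (Suc n)) + dist (s n) x" for n
    using trunc_dist_le_add_dist[of x \<xi> "s n"] s[of n] by (simp add: dist_commute)
  ultimately have "trunc_dist x \<xi> \<le> 0"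
    by (intro LIMSEQ_le_const[where X = "\<lambda>n. inverse (real (Suc n)) + dist (s n) x"]) auto
  then have "\<xi> = j x"
    using trunc_dist_bounds(1)[of x \<xi>] by (intro trunc_dist_eq_0D) simp
  then show ?thesis by simp
qed

lemma range_j_borel:
  assumes "complete (UNIV :: 'a set)"
  shows "range j \<in> sets borel"
proof -
  have "range j \<subseteq> near_range (inverse (real (Suc n)))" for n
    by (rule range_j_subset_near_range) simp
  then have "range j = (\<Inter>n. near_range (inverse (real (Suc n))))"
    using Inter_near_range_subset_range_j[OF assms] by (intro antisym INT_greatest subsetI) auto
  then show ?thesis
    by (simp add: borel_open open_near_range sets.countable_INT)
qed

lemma compact_subset_range_j_finite_cover:
  assumes "compact L" "L \<subseteq> range j" "0 < r"
  obtains F where "finite F" "L \<subseteq> (\<Union>x\<in>F. {\<xi>. trunc_dist x \<xi> < r})"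
proof -
  have "L \<subseteq> (\<Union>x. {\<xi>. trunc_dist x \<xi> < r})"
    using assms(2) range_j_subset_near_range[OF assms(3)] unfolding near_range_def by blast
  then show ?thesis
    by (rule compactE_image[OF assms(1) open_trunc_dist_less]) (rule that)
qed

lemma infdist_less_if_trunc_dist_less:
  assumes "f \<in> F" "trunc_dist f (j x) < r" "r \<le> 1"
  shows "infdist x F < r"
  using infdist_le[OF assms(1), of x] dist_less_if_trunc_dist_less[OF assms(2,3)] by simp

lemma infdist_ge_if_trunc_dist_greater:
  assumes "F \<noteq> {}" "\<And>f. f \<in> F \<Longrightarrow> r < trunc_dist f (j x)"
  shows "r \<le> infdist x F"
  unfolding infdist_notempty[OF assms(1)]
proof (rule cINF_greatest[OF assms(1)])
  fix f assume "f \<in> F"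
  then show "r \<le> dist x f"
    using assms(2) by (fastforce simp: trunc_dist_j)
qed

end

section \<open>Test functions on the compactification of pairs\<close>

locale stone_cech_pairs =
  fixes \<iota> :: "'a::metric_space \<times> 'a \<Rightarrow> 'b::t2_space" and dd :: "'b \<Rightarrow> ennreal"
  assumes stone_cech: "is_stone_cech_compactification Mtilde \<iota>"
    and continuous_on_dd: "continuous_on UNIV dd"
    and dd_\<iota>: "\<And>x y. x \<noteq> y \<Longrightarrow> dd (\<iota> (x, y)) = ennreal (dist x y)"
begin

lemma compact_pair_compactification: "compact (UNIV :: 'b set)"
  using stone_cech unfolding is_stone_cech_compactification_def by (elim conjE)

lemma closure_\<iota>_Mtilde: "closure (\<iota> ` Mtilde) = UNIV"
  using stone_cech unfolding is_stone_cech_compactification_def by (elim conjE)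

lemma continuous_on_\<iota>: "continuous_on Mtilde \<iota>"
proof -
  obtain \<iota>' where "homeomorphism Mtilde (\<iota> ` Mtilde) \<iota> \<iota>'"
    using stone_cech unfolding is_stone_cech_compactification_def by (elim conjE exE)
  then show ?thesis unfolding homeomorphism_def by (elim conjE)
qed

lemma pair_extension_exists:
  fixes f :: "'a \<times> 'a \<Rightarrow> real"
  assumes "continuous_on Mtilde f" "bounded (f ` Mtilde)"
  shows "\<exists>g. continuous_on UNIV g \<and> (\<forall>p\<in>Mtilde. g (\<iota> p) = f p)"
  using stone_cech assms unfolding is_stone_cech_compactification_def by (elim conjE) blast

lemma mem_closed_by_pair_density:
  assumes "continuous_on UNIV f" "closed S" "open V"
    and "\<And>x y. x \<noteq> y \<Longrightarrow> \<iota> (x, y) \<in> V \<Longrightarrow> f (\<iota> (x, y)) \<in> S" "w \<in> V"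
  shows "f w \<in> S"
proof -
  have "f ` (V \<inter> \<iota> ` Mtilde) \<subseteq> S"
    using assms(4) by (auto simp: Mtilde_def)
  then show ?thesis
    using image_subset_closed_by_density[OF assms(1-3) closure_\<iota>_Mtilde] assms(5) by blast
qed

lemma min_quotient_in_G_set:
  fixes \<phi> :: "'a \<Rightarrow> real"
  assumes \<phi>_nonneg: "\<And>x. 0 \<le> \<phi> x" and \<phi>_lipschitz: "\<And>x y. \<phi> x \<le> \<phi> y + dist x y"
    and "continuous_on UNIV g"
    and g_\<iota>: "\<And>x y. x \<noteq> y \<Longrightarrow> g (\<iota> (x, y)) = min 1 ((\<phi> x + \<phi> y) / dist x y)"
  shows "g \<in> G_set \<iota>"
  unfolding G_set_def
proof (intro CollectI conjI allI impI assms(3))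
  fix x u y :: 'a assume "x \<noteq> u \<and> u \<noteq> y \<and> x \<noteq> y"
  then have "dist x y * g (\<iota> (x, y)) = min (dist x y) (\<phi> x + \<phi> y)"
    "dist x u * g (\<iota> (x, u)) = min (dist x u) (\<phi> x + \<phi> u)"
    "dist u y * g (\<iota> (u, y)) = min (dist u y) (\<phi> u + \<phi> y)"
    by (simp_all add: g_\<iota> min_mult_distrib_left)
  moreover have "min (dist x y) (\<phi> x + \<phi> y) \<le> min (dist x u) (\<phi> x + \<phi> u) + min (dist u y) (\<phi> u + \<phi> y)"
    using dist_triangle[of x y u] \<phi>_lipschitz[of x u] \<phi>_lipschitz[of y u] \<phi>_nonneg[of u]
    by (intro min_dist_triangle) (simp_all add: dist_commute)
  ultimately show "dist x y * g (\<iota> (x, y)) \<le> dist x u * g (\<iota> (x, u)) + dist u y * g (\<iota> (u, y))"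
    by simp
qed

lemma min_quotient_extension_exists:
  fixes \<phi> :: "'a \<Rightarrow> real"
  assumes \<phi>_nonneg: "\<And>x. 0 \<le> \<phi> x" and \<phi>_lipschitz: "\<And>x y. \<phi> x \<le> \<phi> y + dist x y"
  obtains g where "g \<in> G_set \<iota>" "\<And>w. 0 \<le> g w" "\<And>w. g w \<le> 1"
    "\<And>x y. x \<noteq> y \<Longrightarrow> g (\<iota> (x, y)) = min 1 ((\<phi> x + \<phi> y) / dist x y)"
proof -
  define h where "h p = min 1 ((\<phi> (fst p) + \<phi> (snd p)) / dist (fst p) (snd p))" for p
  have "dist (\<phi> x) (\<phi> y) \<le> 1 * dist x y" for x y
    using \<phi>_lipschitz[of x y] \<phi>_lipschitz[of y x] by (simp add: dist_real_def dist_commute abs_le_iff)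
  then have "continuous_on UNIV \<phi>"
    by (intro lipschitz_on_continuous_on[of 1] lipschitz_onI) auto
  then have "continuous_on Mtilde (\<lambda>p. \<phi> (fst p))" "continuous_on Mtilde (\<lambda>p. \<phi> (snd p))"
    using continuous_on_compose2[OF _ continuous_on_fst[OF continuous_on_id], of UNIV \<phi> Mtilde]
      continuous_on_compose2[OF _ continuous_on_snd[OF continuous_on_id], of UNIV \<phi> Mtilde]
    by simp_all
  then have "continuous_on Mtilde h"
    unfolding h_def
    by (intro continuous_on_min continuous_on_const continuous_on_divide continuous_on_add continuous_on_dist
        continuous_on_fst continuous_on_snd continuous_on_id) (auto simp: Mtilde_def)
  moreover have h_range: "h p \<in> {0..1}" if "p \<in> Mtilde" for p
    using that \<phi>_nonneg[of "fst p"] \<phi>_nonneg[of "snd p"] by (auto simp: h_def Mtilde_def)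
  then have "bounded (h ` Mtilde)"
    by (intro bounded_subset[OF bounded_closed_interval[of 0 1]]) blast
  ultimately obtain g where g: "continuous_on UNIV g" "\<And>p. p \<in> Mtilde \<Longrightarrow> g (\<iota> p) = h p"
    using pair_extension_exists by blast
  have g_\<iota>: "g (\<iota> (x, y)) = min 1 ((\<phi> x + \<phi> y) / dist x y)" if "x \<noteq> y" for x y
    using g(2)[of "(x, y)"] that by (simp add: Mtilde_def h_def)
  have "g w \<in> {0..1}" for w
  proof (rule mem_closed_by_pair_density[OF g(1) closed_atLeastAtMost open_UNIV])
    fix x y :: 'a assume "x \<noteq> y"
    then show "g (\<iota> (x, y)) \<in> {0..1}"
      using h_range[of "(x, y)"] g(2)[of "(x, y)"] by (simp add: Mtilde_def)
  qed simp
  then show ?thesis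
    using min_quotient_in_G_set[OF assms g(1) g_\<iota>] g_\<iota> by (intro that[of g]) auto
qed

lemma const_quotient_le_off_zero:
  assumes "continuous_on UNIV g" "\<And>x y. x \<noteq> y \<Longrightarrow> g (\<iota> (x, y)) = min 1 (\<epsilon> / dist x y)"
    and "0 \<le> \<epsilon>" "0 < r" "ennreal r < dd w"
  shows "g w \<le> \<epsilon> / r"
proof -
  have "g w \<in> {..\<epsilon> / r}"
  proof (rule mem_closed_by_pair_density[OF assms(1) closed_atMost])
    show "open {w. ennreal r < dd w}"
      by (intro open_Collect_less continuous_on_const continuous_on_dd)
    fix x y :: 'a assume "x \<noteq> y" "\<iota> (x, y) \<in> {w. ennreal r < dd w}"
    then have "r < dist x y"
      using \<open>0 < r\<close> by (simp add: dd_\<iota> ennreal_less_iff)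
    then have "\<epsilon> / dist x y \<le> \<epsilon> / r"
      using \<open>0 \<le> \<epsilon>\<close> \<open>0 < r\<close> by (intro divide_left_mono mult_pos_pos) auto
    then show "g (\<iota> (x, y)) \<in> {..\<epsilon> / r}"
      using \<open>x \<noteq> y\<close> by (simp add: assms(2))
  qed (use assms(5) in simp)
  then show ?thesis by simp
qed

lemma const_quotient_ge_1_on_zero:
  assumes "continuous_on UNIV g" "\<And>x y. x \<noteq> y \<Longrightarrow> g (\<iota> (x, y)) = min 1 (\<epsilon> / dist x y)"
    and "0 < \<epsilon>" "dd w = 0"
  shows "1 \<le> g w"
proof -
  have "g w \<in> {1..}"
  proof (rule mem_closed_by_pair_density[OF assms(1) closed_atLeast])
    show "open {w. dd w < ennreal \<epsilon>}"
      by (intro open_Collect_less continuous_on_const continuous_on_dd)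
    fix x y :: 'a assume "x \<noteq> y" "\<iota> (x, y) \<in> {w. dd w < ennreal \<epsilon>}"
    then have "0 < dist x y" "dist x y < \<epsilon>"
      by (simp_all add: dd_\<iota> ennreal_less_iff)
    then show "g (\<iota> (x, y)) \<in> {1..}"
      using \<open>x \<noteq> y\<close> by (simp add: assms(2) le_divide_eq)
  qed (use assms(3,4) in simp)
  then show ?thesis by simp
qed

lemma nonzero_dd_frakC: "- dd -` {0} \<in> frakC \<iota>"
proof (rule frakC_criterion[OF compact_pair_compactification _ frakC_UNIV,
      where A = "\<lambda>_. dd -` {0}" and c = "\<lambda>_. 1"])
  have "closed (dd -` {0})"
    by (rule closed_vimage[OF closed_singleton continuous_on_dd])
  then show "- dd -` {0} \<in> sets borel" "dd -` {0} \<in> sets borel"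
    by (simp_all add: borel_closed borel_open open_Compl)
  fix K :: "'b set" and \<tau> :: real
  assume K: "compact K" "K \<subseteq> - dd -` {0}" and "0 < \<tau>"
  have "0 < dd w" if "w \<in> K" for w
  proof -
    have "dd w \<noteq> 0"
      using K(2) that by auto
    then show ?thesis
      by (metis not_gr_zero)
  qed
  then obtain r where r: "0 < r" "\<And>w. w \<in> K \<Longrightarrow> ennreal r < dd w"
    using compact_ennreal_lower_bound[OF K(1) continuous_on_subset[OF continuous_on_dd subset_UNIV]] by blast
  obtain g where g: "g \<in> G_set \<iota>" "\<And>w. 0 \<le> g w" "\<And>w. g w \<le> 1"
    and g_\<iota>: "\<And>x y. x \<noteq> y \<Longrightarrow> g (\<iota> (x, y)) = min 1 ((\<tau> * r / 2 + \<tau> * r / 2) / dist x y)"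
    by (rule min_quotient_extension_exists[of "\<lambda>_. \<tau> * r / 2"]) (use \<open>0 < \<tau>\<close> r(1) in auto)
  then have "\<And>x y. x \<noteq> y \<Longrightarrow> g (\<iota> (x, y)) = min 1 (\<tau> * r / dist x y)"
    by simp
  note g_quotient = G_set_continuous[OF g(1)] this
  have "g w \<le> \<tau>" if "w \<in> K" for w
    using const_quotient_le_off_zero[OF g_quotient _ r(1) r(2)[OF that]] \<open>0 < \<tau>\<close> r(1) by simp
  moreover have "1 \<le> g w" if "w \<in> dd -` {0}" for w
    using const_quotient_ge_1_on_zero[OF g_quotient] \<open>0 < \<tau>\<close> r(1) that by simp
  ultimately show "\<exists>g\<in>G_set \<iota>. (\<forall>w. 0 \<le> g w \<and> g w \<le> 1) \<and> (\<forall>w\<in>K. g w \<le> \<tau>) \<and>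
      (\<forall>w\<in>dd -` {0}. 1 \<le> g w)"
    using g(2,3) by (intro bexI[OF _ g(1)]) auto
qed auto

end

section \<open>The sets R, p^-1(M x M) and the image of Mtilde\<close>

locale pointed_compactifications =
  samuel_compactification j + stone_cech_pairs \<iota> dd
  for j :: "'a::metric_space \<Rightarrow> 'c::t2_space" and \<iota> :: "'a \<times> 'a \<Rightarrow> 'b::t2_space" and dd +
  fixes p1 p2 :: "'b \<Rightarrow> 'c" and z :: 'a and d0 :: "'c \<Rightarrow> ennreal"
  assumes continuous_on_p1: "continuous_on UNIV p1" and continuous_on_p2: "continuous_on UNIV p2"
    and p1_\<iota>: "\<And>x y. x \<noteq> y \<Longrightarrow> p1 (\<iota> (x, y)) = j x"
    and p2_\<iota>: "\<And>x y. x \<noteq> y \<Longrightarrow> p2 (\<iota> (x, y)) = j y"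
    and continuous_on_d0: "continuous_on UNIV d0"
    and d0_j: "\<And>x. d0 (j x) = ennreal (dist x z)"
begin

lemma continuous_on_d0_p: "continuous_on UNIV (\<lambda>w. d0 (p1 w))" "continuous_on UNIV (\<lambda>w. d0 (p2 w))"
  using continuous_on_compose2[OF continuous_on_d0 continuous_on_p1]
    continuous_on_compose2[OF continuous_on_d0 continuous_on_p2] by simp_all

lemma continuous_on_trunc_dist_p:
  "continuous_on UNIV (\<lambda>w. trunc_dist x (p1 w))" "continuous_on UNIV (\<lambda>w. trunc_dist x (p2 w))"
  using continuous_on_compose2[OF continuous_on_trunc_dist continuous_on_p1]
    continuous_on_compose2[OF continuous_on_trunc_dist continuous_on_p2] by simp_all

definition R_set :: "'b set" where
  "R_set = {w. d0 (p1 w) < \<infinity> \<and> d0 (p2 w) < \<infinity>}"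

lemma open_R_set: "open R_set"
  unfolding R_set_def
  by (intro open_Collect_conj open_Collect_less continuous_on_d0_p continuous_on_const)

lemma min_quotient_nonpos_near_base_point:
  assumes continuous_g: "continuous_on UNIV g"
    and g_\<iota>: "\<And>x y. x \<noteq> y \<Longrightarrow>
      g (\<iota> (x, y)) = min 1 ((infdist_excess {z} n x + infdist_excess {z} n y) / dist x y)"
    and "d0 (p1 w) < ennreal n" "d0 (p2 w) < ennreal n"
  shows "g w \<le> 0"
proof -
  have "g w \<in> {..0}"
  proof (rule mem_closed_by_pair_density[OF continuous_g closed_atMost])
    show "open {w. d0 (p1 w) < ennreal n \<and> d0 (p2 w) < ennreal n}"
      by (intro open_Collect_conj open_Collect_less continuous_on_d0_p continuous_on_const)
    fix x y :: 'a assume "x \<noteq> y" "\<iota> (x, y) \<in> {w. d0 (p1 w) < ennreal n \<and> d0 (p2 w) < ennreal n}"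
    then have "dist x z < n" "dist y z < n"
      by (simp_all add: p1_\<iota> p2_\<iota> d0_j ennreal_less_iff)
    then show "g (\<iota> (x, y)) \<in> {..0}"
      using \<open>x \<noteq> y\<close> by (simp add: g_\<iota> infdist_excess_def infdist_singleton)
  qed (use assms(3,4) in simp)
  then show ?thesis by simp
qed

lemma min_quotient_ge_half_off_R_set:
  assumes continuous_g: "continuous_on UNIV g"
    and g_\<iota>: "\<And>x y. x \<noteq> y \<Longrightarrow>
      g (\<iota> (x, y)) = min 1 ((infdist_excess {z} n x + infdist_excess {z} n y) / dist x y)"
    and "0 < n" "w \<notin> R_set"
  shows "1 / 2 \<le> g w"
proof -
  have "g w \<in> {1 / 2..}"
  proof (rule mem_closed_by_pair_density[OF continuous_g closed_atLeast])
    show "open ({w. ennreal (3 * n) < d0 (p1 w)} \<union> {w. ennreal (3 * n) < d0 (p2 w)})"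
      by (intro open_Un open_Collect_less continuous_on_d0_p continuous_on_const)
    fix x y :: 'a
    assume "x \<noteq> y" "\<iota> (x, y) \<in> {w. ennreal (3 * n) < d0 (p1 w)} \<union> {w. ennreal (3 * n) < d0 (p2 w)}"
    then have "3 * n < dist x z \<or> 3 * n < dist y z"
      using \<open>0 < n\<close> by (auto simp: p1_\<iota> p2_\<iota> d0_j ennreal_less_iff)
    then have "dist x y \<le> 2 * (infdist_excess {z} n x + infdist_excess {z} n y)"
      using dist_triangle2[of x y z] \<open>0 < n\<close> by (auto simp: infdist_excess_def infdist_singleton max_def)
    then show "g (\<iota> (x, y)) \<in> {1 / 2..}"
      using \<open>x \<noteq> y\<close> by (simp add: g_\<iota> le_divide_eq)
  qed (use \<open>w \<notin> R_set\<close> in \<open>auto simp: R_set_def less_top[symmetric]\<close>)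
  then show ?thesis by simp
qed

lemma R_set_frakC: "R_set \<in> frakC \<iota>"
proof (rule frakC_criterion[OF compact_pair_compactification _ frakC_UNIV,
      where A = "\<lambda>_. - R_set" and c = "\<lambda>_. 1 / 2"])
  show "R_set \<in> sets borel" "- R_set \<in> sets borel"
    using open_R_set by (simp_all add: borel_open borel_closed)
  fix K :: "'b set" and \<tau> :: real
  assume K: "compact K" "K \<subseteq> R_set" and "0 < \<tau>"
  obtain n where n: "0 < n" "\<And>w. w \<in> K \<Longrightarrow> max (d0 (p1 w)) (d0 (p2 w)) < ennreal n"
    by (rule compact_ennreal_upper_bound[OF K(1) continuous_on_subset[OF continuous_on_max[OF continuous_on_d0_p]]])
      (use K(2) in \<open>auto simp: R_set_def\<close>)
  obtain g where g: "g \<in> G_set \<iota>" "\<And>w. 0 \<le> g w" "\<And>w. g w \<le> 1"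
    and g_\<iota>: "\<And>x y. x \<noteq> y \<Longrightarrow>
      g (\<iota> (x, y)) = min 1 ((infdist_excess {z} n x + infdist_excess {z} n y) / dist x y)"
    using min_quotient_extension_exists[OF infdist_excess_nonneg infdist_excess_le_add_dist] by blast
  have "g w \<le> \<tau>" if "w \<in> K" for w
    using min_quotient_nonpos_near_base_point[OF G_set_continuous[OF g(1)] g_\<iota>] n(2)[OF that] \<open>0 < \<tau>\<close>
    by force
  moreover have "1 / 2 \<le> g w" if "w \<in> - R_set" for w
    using min_quotient_ge_half_off_R_set[OF G_set_continuous[OF g(1)] g_\<iota> n(1)] that by blast
  ultimately show "\<exists>g\<in>G_set \<iota>. (\<forall>w. 0 \<le> g w \<and> g w \<le> 1) \<and> (\<forall>w\<in>K. g w \<le> \<tau>) \<and>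
      (\<forall>w\<in>- R_set. 1 / 2 \<le> g w)"
    using g(2,3) by (intro bexI[OF _ g(1)]) auto
qed auto

lemma dd_finite_on_R_set:
  assumes "w \<in> R_set"
  shows "dd w < \<infinity>"
proof -
  obtain a b where ab: "d0 (p1 w) = ennreal a" "d0 (p2 w) = ennreal b" "0 \<le> a" "0 \<le> b"
    using assms unfolding R_set_def by (cases "d0 (p1 w)"; cases "d0 (p2 w)") auto
  have "dd w \<in> {..ennreal (a + b + 2)}"
  proof (rule mem_closed_by_pair_density[OF continuous_on_dd closed_atMost])
    show "open {w. d0 (p1 w) < ennreal (a + 1) \<and> d0 (p2 w) < ennreal (b + 1)}"
      by (intro open_Collect_conj open_Collect_less continuous_on_d0_p continuous_on_const)
    fix x y :: 'a
    assume "x \<noteq> y" "\<iota> (x, y) \<in> {w. d0 (p1 w) < ennreal (a + 1) \<and> d0 (p2 w) < ennreal (b + 1)}"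
    then have "dist x z < a + 1" "dist y z < b + 1"
      by (simp_all add: p1_\<iota> p2_\<iota> d0_j ennreal_less_iff)
    then have "dist x y \<le> a + b + 2"
      using dist_triangle2[of x y z] by simp
    then show "dd (\<iota> (x, y)) \<in> {..ennreal (a + b + 2)}"
      using \<open>x \<noteq> y\<close> by (simp add: dd_\<iota> ennreal_leI)
  qed (use ab in \<open>simp add: ennreal_less_iff\<close>)
  then show ?thesis
    by (simp add: le_less_trans)
qed

definition pM_set :: "'b set" where
  "pM_set = {w. p1 w \<in> range j \<and> p2 w \<in> range j}"

lemma pM_set_subset_R_set: "pM_set \<subseteq> R_set"
  unfolding pM_set_def R_set_def by (auto simp: d0_j)

lemma pM_set_borel:
  assumes "complete (UNIV :: 'a set)"
  shows "pM_set \<in> sets borel"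
proof -
  have "p1 -` range j \<in> sets borel" "p2 -` range j \<in> sets borel"
    using measurable_sets[OF borel_measurable_continuous_onI[OF continuous_on_p1] range_j_borel[OF assms]]
      measurable_sets[OF borel_measurable_continuous_onI[OF continuous_on_p2] range_j_borel[OF assms]]
    by simp_all
  moreover have "pM_set = p1 -` range j \<inter> p2 -` range j"
    unfolding pM_set_def by blast
  ultimately show ?thesis by simp
qed

definition escape_set :: "nat \<Rightarrow> 'b set" where
  "escape_set n = {w. dd w < ennreal (real (Suc n)) \<and>
     (p1 w \<notin> near_range (inverse (real (Suc n))) \<or> p2 w \<notin> near_range (inverse (real (Suc n))))}"

lemma escape_set_borel: "escape_set n \<in> sets borel"
proof -
  let ?r = "inverse (real (Suc n))"
  have "open {w. dd w < ennreal (real (Suc n))}"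
    by (intro open_Collect_less continuous_on_dd continuous_on_const)
  moreover have "closed (p1 -` (- near_range ?r))" "closed (p2 -` (- near_range ?r))"
    using open_near_range by (auto intro!: closed_vimage continuous_on_p1 continuous_on_p2)
  moreover have "escape_set n = {w. dd w < ennreal (real (Suc n))} \<inter>
      (p1 -` (- near_range ?r) \<union> p2 -` (- near_range ?r))"
    unfolding escape_set_def by blast
  ultimately show ?thesis
    by (simp add: borel_open borel_closed sets.Int sets.Un)
qed

lemma R_set_diff_pM_set_subset:
  assumes "complete (UNIV :: 'a set)"
  shows "R_set - pM_set \<subseteq> (\<Union>n. escape_set n)"
proof
  fix w assume w: "w \<in> R_set - pM_set"
  obtain q where q: "0 \<le> q" "dd w = ennreal q"
    using dd_finite_on_R_set[of w] w by (cases "dd w") auto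
  obtain n1 where "q < real n1"
    using reals_Archimedean2 by blast
  then have n1: "dd w < ennreal (real n1)"
    using q by (simp add: ennreal_less_iff)
  have "\<exists>m. p1 w \<notin> near_range (inverse (real (Suc m))) \<or> p2 w \<notin> near_range (inverse (real (Suc m)))"
    using w Inter_near_range_subset_range_j[OF assms] unfolding pM_set_def by blast
  then obtain m where m: "p1 w \<notin> near_range (inverse (real (Suc m))) \<or> p2 w \<notin> near_range (inverse (real (Suc m)))"
    by blast
  define N where "N = max n1 m"
  have "near_range (inverse (real (Suc N))) \<subseteq> near_range (inverse (real (Suc m)))"
    unfolding N_def by (intro near_range_mono) (simp add: le_imp_inverse_le)
  moreover have "ennreal (real n1) \<le> ennreal (real (Suc N))"
    unfolding N_def by (intro ennreal_leI) simp
  ultimately have "w \<in> escape_set N"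
    using m n1 unfolding escape_set_def by (auto dest: order_less_le_trans)
  then show "w \<in> (\<Union>n. escape_set n)" by blast
qed

definition net_nbhd :: "'a set \<Rightarrow> real \<Rightarrow> 'b set" where
  "net_nbhd F r = (\<Union>f\<in>F. {w. trunc_dist f (p1 w) < r}) \<inter> (\<Union>f\<in>F. {w. trunc_dist f (p2 w) < r})"

lemma open_net_nbhd: "open (net_nbhd F r)"
  unfolding net_nbhd_def
  by (intro open_Int open_UN ballI open_Collect_less continuous_on_trunc_dist_p continuous_on_const)

(* The base point z only makes F nonempty; recall that infdist x {} = 0. *)
lemma pM_set_finite_cover:
  assumes "compact K" "K \<subseteq> pM_set" "0 < r"
  obtains F where "finite F" "z \<in> F" "K \<subseteq> net_nbhd F r"
proof -
  have "compact (p1 ` K \<union> p2 ` K)"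
    using assms(1) continuous_on_subset[OF continuous_on_p1] continuous_on_subset[OF continuous_on_p2]
    by (intro compact_Un compact_continuous_image) auto
  moreover have "p1 ` K \<union> p2 ` K \<subseteq> range j"
    using assms(2) unfolding pM_set_def by blast
  ultimately obtain F where "finite F" "p1 ` K \<union> p2 ` K \<subseteq> (\<Union>f\<in>F. {\<xi>. trunc_dist f \<xi> < r})"
    using assms(3) by (rule compact_subset_range_j_finite_cover)
  then have "finite (insert z F)" "K \<subseteq> net_nbhd (insert z F) r"
    unfolding net_nbhd_def by blast+
  then show ?thesis
    by (intro that) simp_all
qed

lemma min_quotient_nonpos_on_net_nbhd:
  assumes "continuous_on UNIV g"
    and g_\<iota>: "\<And>x y. x \<noteq> y \<Longrightarrow>
      g (\<iota> (x, y)) = min 1 ((infdist_excess F r x + infdist_excess F r y) / dist x y)"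
    and "r \<le> 1" "w \<in> net_nbhd F r"
  shows "g w \<le> 0"
proof -
  have "g w \<in> {..0}"
  proof (rule mem_closed_by_pair_density[OF assms(1) closed_atMost open_net_nbhd _ assms(4)])
    fix x y :: 'a assume "x \<noteq> y" "\<iota> (x, y) \<in> net_nbhd F r"
    then have "\<exists>f\<in>F. trunc_dist f (p1 (\<iota> (x, y))) < r" "\<exists>f\<in>F. trunc_dist f (p2 (\<iota> (x, y))) < r"
      unfolding net_nbhd_def by blast+
    then have "\<exists>f\<in>F. trunc_dist f (j x) < r" "\<exists>f\<in>F. trunc_dist f (j y) < r"
      by (simp_all only: p1_\<iota>[OF \<open>x \<noteq> y\<close>] p2_\<iota>[OF \<open>x \<noteq> y\<close>])
    then have "infdist x F < r" "infdist y F < r"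
      using assms(3) by (metis infdist_less_if_trunc_dist_less)+
    then show "g (\<iota> (x, y)) \<in> {..0}"
      using \<open>x \<noteq> y\<close> by (simp add: g_\<iota> infdist_excess_def)
  qed
  then show ?thesis by simp
qed

lemma min_quotient_large_on_escape_set:
  assumes continuous_g: "continuous_on UNIV g"
    and g_\<iota>: "\<And>x y. x \<noteq> y \<Longrightarrow>
      g (\<iota> (x, y)) = min 1 ((infdist_excess F (a / 4) x + infdist_excess F (a / 4) y) / dist x y)"
    and a_def: "a = inverse (real (Suc n))" and F: "finite F" "F \<noteq> {}" and "w \<in> escape_set n"
  shows "a / 4 / real (Suc n) \<le> g w"
proof -
  define \<phi> where "\<phi> = infdist_excess F (a / 4)"
  have a: "0 < a" "a \<le> 1"
    unfolding a_def by (simp_all add: inverse_le_1_iff)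
  have "g w \<in> {a / 4 / real (Suc n)..}"
  proof (rule mem_closed_by_pair_density[OF continuous_g closed_atLeast])
    let ?V = "{w. dd w < ennreal (real (Suc n))} \<inter>
      ((\<Inter>f\<in>F. {w. a / 2 < trunc_dist f (p1 w)}) \<union> (\<Inter>f\<in>F. {w. a / 2 < trunc_dist f (p2 w)}))"
    show "open ?V"
      by (intro open_Int open_Un open_INT F(1) ballI open_Collect_less continuous_on_dd
          continuous_on_trunc_dist_p continuous_on_const)
    have "a / 2 < trunc_dist f \<xi>" if "\<xi> \<notin> near_range a" for f \<xi>
    proof -
      have "a \<le> trunc_dist f \<xi>"
        using that unfolding near_range_def by (auto simp: not_less)
      then show ?thesis
        using a(1) by linarith
    qed
    then show "w \<in> ?V"
      using \<open>w \<in> escape_set n\<close> unfolding escape_set_def a_def[symmetric] by auto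
    fix x y :: 'a assume "x \<noteq> y" "\<iota> (x, y) \<in> ?V"
    then have dist_less: "ennreal (dist x y) < ennreal (real (Suc n))"
      and far: "(\<forall>f\<in>F. a / 2 < trunc_dist f (j x)) \<or> (\<forall>f\<in>F. a / 2 < trunc_dist f (j y))"
      by (simp_all only: dd_\<iota>[OF \<open>x \<noteq> y\<close>, symmetric] p1_\<iota>[OF \<open>x \<noteq> y\<close>, symmetric]
          p2_\<iota>[OF \<open>x \<noteq> y\<close>, symmetric]) blast+
    from dist_less have "dist x y < real (Suc n)"
      by (rule ennreal_less_iff[OF zero_le_dist, THEN iffD1])
    have "a / 2 \<le> infdist x F \<or> a / 2 \<le> infdist y F"
      using far F(2) infdist_ge_if_trunc_dist_greater[of F "a / 2"] by blast
    then have "a / 4 \<le> \<phi> x \<or> a / 4 \<le> \<phi> y"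
      unfolding \<phi>_def infdist_excess_def by (auto simp: le_max_iff_disj)
    then have "a / 4 \<le> \<phi> x + \<phi> y"
      using infdist_excess_nonneg[of F "a / 4" x] infdist_excess_nonneg[of F "a / 4" y]
      unfolding \<phi>_def by linarith
    then have "a / 4 / real (Suc n) \<le> min 1 ((\<phi> x + \<phi> y) / dist x y)"
      using \<open>x \<noteq> y\<close> \<open>dist x y < real (Suc n)\<close> a by (intro div_le_min_1_div) auto
    then show "g (\<iota> (x, y)) \<in> {a / 4 / real (Suc n)..}"
      using \<open>x \<noteq> y\<close> by (simp add: g_\<iota> \<phi>_def)
  qed
  then show ?thesis by simp
qed

lemma escape_set_separated:
  assumes "compact K" "K \<subseteq> pM_set" "0 < \<tau>"
  shows "\<exists>g\<in>G_set \<iota>. (\<forall>w. 0 \<le> g w \<and> g w \<le> 1) \<and> (\<forall>w\<in>K. g w \<le> \<tau>) \<and>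
    (\<forall>w\<in>escape_set n. inverse (real (Suc n)) / 4 / real (Suc n) \<le> g w)"
proof -
  define a where "a = inverse (real (Suc n))"
  have a: "0 < a" "a \<le> 1"
    unfolding a_def by (simp_all add: inverse_le_1_iff)
  obtain F where F: "finite F" "z \<in> F" "K \<subseteq> net_nbhd F (a / 4)"
    using pM_set_finite_cover[OF assms(1,2), of "a / 4"] a(1) by auto
  obtain g where g: "g \<in> G_set \<iota>" "\<And>w. 0 \<le> g w" "\<And>w. g w \<le> 1"
    and g_\<iota>: "\<And>x y. x \<noteq> y \<Longrightarrow>
      g (\<iota> (x, y)) = min 1 ((infdist_excess F (a / 4) x + infdist_excess F (a / 4) y) / dist x y)"
    using min_quotient_extension_exists[OF infdist_excess_nonneg infdist_excess_le_add_dist] by blast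
  have "g w \<le> \<tau>" if "w \<in> K" for w
    using min_quotient_nonpos_on_net_nbhd[OF G_set_continuous[OF g(1)] g_\<iota>, of w] F(3) that a(2) assms(3)
    by force
  moreover have "a / 4 / real (Suc n) \<le> g w" if "w \<in> escape_set n" for w
    using min_quotient_large_on_escape_set[OF G_set_continuous[OF g(1)] g_\<iota> a_def F(1) _ that] F(2)
    by blast
  ultimately show ?thesis
    using g(2,3) unfolding a_def by (intro bexI[OF _ g(1)]) auto
qed

lemma pM_set_frakC:
  assumes "complete (UNIV :: 'a set)"
  shows "pM_set \<in> frakC \<iota>"
  by (rule frakC_criterion[OF compact_pair_compactification pM_set_borel[OF assms] R_set_frakC
        pM_set_subset_R_set escape_set_borel R_set_diff_pM_set_subset[OF assms] _ escape_set_separated])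
    auto

lemma dd_eq_0_if_p_eq:
  assumes "p1 w = j a" "p2 w = j a"
  shows "dd w = 0"
proof -
  have dd_le: "dd w \<le> ennreal r" if "0 < r" for r
  proof -
    define t where "t = min 1 (r / 2)"
    have t: "0 < t" "t \<le> 1" "2 * t \<le> r"
      unfolding t_def using that by auto
    have "dd w \<in> {..ennreal r}"
    proof (rule mem_closed_by_pair_density[OF continuous_on_dd closed_atMost])
      show "open {w. trunc_dist a (p1 w) < t \<and> trunc_dist a (p2 w) < t}"
        by (intro open_Collect_conj open_Collect_less continuous_on_trunc_dist_p continuous_on_const)
      show "w \<in> {w. trunc_dist a (p1 w) < t \<and> trunc_dist a (p2 w) < t}"
        using assms t(1) by (simp add: trunc_dist_j)
      fix x y :: 'a assume "x \<noteq> y" "\<iota> (x, y) \<in> {w. trunc_dist a (p1 w) < t \<and> trunc_dist a (p2 w) < t}"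
      then have "trunc_dist a (j x) < t" "trunc_dist a (j y) < t"
        by (simp_all add: p1_\<iota> p2_\<iota>)
      then have "dist x a < t" "dist y a < t"
        using t(2) dist_less_if_trunc_dist_less by blast+
      then have "dist x y \<le> r"
        using dist_triangle2[of x y a] t(3) by simp
      then show "dd (\<iota> (x, y)) \<in> {..ennreal r}"
        using \<open>x \<noteq> y\<close> by (simp add: dd_\<iota> ennreal_leI)
    qed
    then show ?thesis by simp
  qed
  have "dd w \<le> 0"
    by (rule ennreal_le_epsilon) (simp add: dd_le)
  then show ?thesis by simp
qed

lemma eq_\<iota>_if_p_eq:
  assumes "p1 w = j a" "p2 w = j b" "a \<noteq> b"
  shows "w = \<iota> (a, b)"
proof (rule ccontr)
  assume "w \<noteq> \<iota> (a, b)"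
  then obtain U W where UW: "open U" "open W" "w \<in> U" "\<iota> (a, b) \<in> W" "U \<inter> W = {}"
    by (metis hausdorff)
  have "open (\<iota> -` W \<inter> Mtilde)"
    using continuous_on_open_vimage[OF open_Mtilde, THEN iffD1, OF continuous_on_\<iota>, rule_format, OF UW(2)] .
  moreover have "(a, b) \<in> \<iota> -` W \<inter> Mtilde"
    using UW(4) assms(3) by (simp add: Mtilde_def)
  ultimately obtain r0 where "0 < r0" "ball a r0 \<times> ball b r0 \<subseteq> \<iota> -` W \<inter> Mtilde"
    by (rule open_prod_contains_balls)
  moreover have "ball a (min 1 r0) \<times> ball b (min 1 r0) \<subseteq> ball a r0 \<times> ball b r0"
    by (intro Sigma_mono) auto
  ultimately obtain r where r: "0 < r" "r \<le> 1" "ball a r \<times> ball b r \<subseteq> \<iota> -` W"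
    by (intro that[of "min 1 r0"]) (simp_all, blast)
  have "w \<in> closure W"
  proof (rule mem_closed_by_pair_density[of id, simplified])
    show "open {w. trunc_dist a (p1 w) < r \<and> trunc_dist b (p2 w) < r}"
      by (intro open_Collect_conj open_Collect_less continuous_on_trunc_dist_p continuous_on_const)
    show "w \<in> {w. trunc_dist a (p1 w) < r \<and> trunc_dist b (p2 w) < r}"
      using assms r(1) by (simp add: trunc_dist_j)
    fix x y :: 'a assume "x \<noteq> y" "\<iota> (x, y) \<in> {w. trunc_dist a (p1 w) < r \<and> trunc_dist b (p2 w) < r}"
    then have "trunc_dist a (j x) < r" "trunc_dist b (j y) < r"
      by (simp_all add: p1_\<iota> p2_\<iota>)
    then have "dist x a < r" "dist y b < r"
      using r(2) dist_less_if_trunc_dist_less by blast+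
    then have "(x, y) \<in> ball a r \<times> ball b r"
      by (simp add: dist_commute)
    then have "\<iota> (x, y) \<in> W"
      using r(3) by blast
    then show "\<iota> (x, y) \<in> closure W"
      using closure_subset by blast
  qed simp
  then show False
    using UW(1,3,5) open_Int_closure_eq_empty by blast
qed

lemma \<iota>_Mtilde_eq: "\<iota> ` Mtilde = R_set \<inter> - dd -` {0} \<inter> pM_set"
proof (intro antisym subsetI)
  fix w assume "w \<in> \<iota> ` Mtilde"
  then obtain x y where "x \<noteq> y" "w = \<iota> (x, y)"
    unfolding Mtilde_def by auto
  then show "w \<in> R_set \<inter> - dd -` {0} \<inter> pM_set"
    by (simp add: R_set_def pM_set_def p1_\<iota> p2_\<iota> d0_j dd_\<iota>)
next
  fix w assume w: "w \<in> R_set \<inter> - dd -` {0} \<inter> pM_set"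
  then obtain a b where ab: "p1 w = j a" "p2 w = j b"
    unfolding pM_set_def by blast
  moreover have "dd w \<noteq> 0"
    using w by simp
  ultimately have "a \<noteq> b"
    using dd_eq_0_if_p_eq by metis
  then show "w \<in> \<iota> ` Mtilde"
    using eq_\<iota>_if_p_eq[OF ab] by (auto simp: Mtilde_def)
qed

end

theorem corollary3p31:
  fixes z :: "'a::complete_space"
    and \<iota> :: "'a \<times> 'a \<Rightarrow> 'b::t2_space" and dd :: "'b \<Rightarrow> ennreal"
    and j :: "'a \<Rightarrow> 'c::t2_space" and p1 p2 :: "'b \<Rightarrow> 'c" and d0 :: "'c \<Rightarrow> ennreal"
  assumes "\<exists>x u y :: 'a. x \<noteq> u \<and> u \<noteq> y \<and> x \<noteq> y"
    and "is_stone_cech_compactification Mtilde \<iota>"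
    and "continuous_on UNIV dd"
    and "\<forall>x y. x \<noteq> y \<longrightarrow> dd (\<iota> (x, y)) = ennreal (dist x y)"
    and "is_samuel_compactification j"
    and "continuous_on UNIV p1" and "continuous_on UNIV p2"
    and "\<forall>x y. x \<noteq> y \<longrightarrow> p1 (\<iota> (x, y)) = j x \<and> p2 (\<iota> (x, y)) = j y"
    and "continuous_on UNIV d0"
    and "\<forall>x. d0 (j x) = ennreal (dist x z)"
  shows "{\<zeta>. d0 (p1 \<zeta>) < \<infinity> \<and> d0 (p2 \<zeta>) < \<infinity>} - dd -` {0} \<in> frakC \<iota> \<and>
         {\<zeta>. p1 \<zeta> \<in> range j \<and> p2 \<zeta> \<in> range j} \<in> frakC \<iota> \<and>
         \<iota> ` Mtilde \<in> frakC \<iota>"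
proof -
  interpret pointed_compactifications j \<iota> dd p1 p2 z d0
    using assms(2-10) by unfold_locales auto
  have R: "R_set \<inter> - dd -` {0} \<in> frakC \<iota>"
    by (rule frakC_Int[OF R_set_frakC nonzero_dd_frakC])
  have M: "pM_set \<in> frakC \<iota>"
    by (rule pM_set_frakC[OF complete_UNIV])
  show ?thesis
    using R M frakC_Int[OF R M] unfolding \<iota>_Mtilde_eq R_set_def pM_set_def Diff_eq
    by (intro conjI)
qed

end
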